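(* Let $n\ge 3$ and let $K_{n+1}=(V,E)$ be the complete graph on $V=\{0,\dots,n\}$. Then $\dim P^3_{[0,n]}(K_{n+1})=|E|-n-2$.
   Context: For an undirected graph $G=(V,E)$ with $V=\{0,\dots,n\}$, a $[0,n]$-$p$-path is a simple (undirected) path from $0$ to $n$ with exactly $p$ edges, and $P^p_{[0,n]}(G)\subseteq\mathbb{R}^E$ is the convex hull of the incidence vectors of all $[0,n]$-$p$-paths in $G$. *)

theory Defs
  imports "HOL-Analysis.Analysis" "HOL-Library.Poly_Mapping" "HOL-Analysis.Finite_Function_Topology"
begin

text \<open>Vectors in R^E are finitely supported real functions on vertex sets
  (finitely supported maps, type poly_mapping); incidence vectors are supported on E.\<close>

definition complete_graph_edges :: "nat set \<Rightarrow> nat set set" where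
  "complete_graph_edges V = {{u, v} | u v. u \<in> V \<and> v \<in> V \<and> u \<noteq> v}"

definition is_st_p_path :: "nat set \<Rightarrow> nat set set \<Rightarrow> nat \<Rightarrow> nat \<Rightarrow> nat \<Rightarrow> nat list \<Rightarrow> bool" where
  "is_st_p_path V E s t p vs \<longleftrightarrow>
     length vs = p + 1 \<and> distinct vs \<and> set vs \<subseteq> V \<and> hd vs = s \<and> last vs = t \<and>
     (\<forall>i < p. {vs ! i, vs ! Suc i} \<in> E)"

definition path_edges :: "nat list \<Rightarrow> nat set set" where
  "path_edges vs = {{vs ! i, vs ! Suc i} | i. Suc i < length vs}"

definition incidence_vector :: "nat set set \<Rightarrow> (nat set \<Rightarrow>\<^sub>0 real)" where
  "incidence_vector F = (\<Sum>e\<in>F. Poly_Mapping.single e 1)"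

definition path_polytope :: "nat set \<Rightarrow> nat set set \<Rightarrow> nat \<Rightarrow> nat \<Rightarrow> nat \<Rightarrow> (nat set \<Rightarrow>\<^sub>0 real) set" where
  "path_polytope V E s t p =
     convex hull {incidence_vector (path_edges vs) | vs. is_st_p_path V E s t p vs}"

text \<open>Affine dimension, literally the library's definition of aff_dim
  (stated there for euclidean spaces), transferred to arbitrary real vector
  spaces, with the independent set B required to be finite.\<close>
definition gen_aff_dim :: "'a::real_vector set \<Rightarrow> int" where
  "gen_aff_dim S = (SOME d. \<exists>B. finite B \<and> affine hull B = affine hull S \<and>
       \<not> affine_dependent B \<and> of_nat (card B) = d + 1)"

end

(*
  The 3-paths from 0 to n in K_(n+1) are the sequences 0, a, b, n with inner vertices a \<noteq> b;
  write p(a, b) (path3_vector n a b) for their incidence vectors. The p(a, b) with a < b,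
  together with the p(j, 1) for j \<ge> 2, are (n-1 choose 2) + (n-2) linearly independent
  vectors: ordered suitably, each of them is the only remaining one that uses a certain edge.
  They affinely span all p(a, b), because p(a, b) = p(b, a) + (p(a, 1) - p(1, a)) + (p(1, b) - p(b, 1)).
  Hence the dimension is (n-1 choose 2) + n - 3 = (n+1 choose 2) - n - 2.
*)
theory Submission
  imports Defs
begin

lemma lookup_scaleR_poly_mapping:
  fixes x :: "'a \<Rightarrow>\<^sub>0 real"
  shows "Poly_Mapping.lookup (r *\<^sub>R x) i = r * Poly_Mapping.lookup x i"
proof -
  have "finite {i. r * Poly_Mapping.lookup x i \<noteq> 0}"
    by (rule finite_subset[of _ "{i. Poly_Mapping.lookup x i \<noteq> 0}"]) auto
  then show ?thesis by (simp add: scaleR_poly_mapping_def)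
qed

lemma linear_lookup: "linear (\<lambda>x :: 'a \<Rightarrow>\<^sub>0 real. Poly_Mapping.lookup x i)"
  by (rule linearI) (simp_all add: lookup_add lookup_scaleR_poly_mapping)

lemma triangular_family_independent:
  fixes v :: "'i \<Rightarrow> 'a::real_vector" and \<phi> :: "'i \<Rightarrow> 'a \<Rightarrow> real" and rank :: "'i \<Rightarrow> nat"
  assumes J: "finite J"
    and lin: "\<And>p. p \<in> J \<Longrightarrow> linear (\<phi> p)"
    and diag: "\<And>p. p \<in> J \<Longrightarrow> \<phi> p (v p) \<noteq> 0"
    and upper: "\<And>p q. p \<in> J \<Longrightarrow> q \<in> J \<Longrightarrow> q \<noteq> p \<Longrightarrow> rank p \<le> rank q
                  \<Longrightarrow> \<phi> p (v q) = 0"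
  shows "inj_on v J \<and> independent (v ` J)"
proof
  show inj: "inj_on v J"
  proof (rule inj_onI, rule ccontr)
    fix p q assume pq: "p \<in> J" "q \<in> J" "v p = v q" "p \<noteq> q"
    have "\<phi> p (v q) = 0 \<or> \<phi> q (v p) = 0"
      using upper[OF pq(1,2)] upper[OF pq(2,1)] pq(4) nat_le_linear by blast
    then show False
      using diag[OF pq(1)] diag[OF pq(2)] pq(3) by auto
  qed
  show "independent (v ` J)"
  proof
    assume "dependent (v ` J)"
    then obtain u where nz: "\<exists>x\<in>v ` J. u x \<noteq> 0" and zero: "(\<Sum>x\<in>v ` J. u x *\<^sub>R x) = 0"
      using dependent_finite[OF finite_imageI[OF J]] by blast
    define c where "c p = u (v p)" for p
    have comb: "(\<Sum>q\<in>J. c q *\<^sub>R v q) = 0"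
      using zero by (simp add: sum.reindex inj c_def)
    have "c p = 0" if "p \<in> J" for p
      using that
    proof (induction "rank p" arbitrary: p rule: less_induct)
      case less
      have "0 = \<phi> p (\<Sum>q\<in>J. c q *\<^sub>R v q)"
        using comb linear_0[OF lin[OF less.prems]] by simp
      also have "\<dots> = c p * \<phi> p (v p) + (\<Sum>q\<in>J - {p}. c q * \<phi> p (v q))"
        using lin[OF less.prems] sum.remove[OF J less.prems]
        by (simp add: linear_sum linear_scale o_def)
      also have "(\<Sum>q\<in>J - {p}. c q * \<phi> p (v q)) = 0"
      proof (rule sum.neutral, rule ballI)
        fix q assume "q \<in> J - {p}"
        then show "c q * \<phi> p (v q) = 0"
          using less.hyps upper[OF less.prems] by (cases "rank q < rank p") auto
      qed
      finally show ?case using diag[OF less.prems] by simp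
    qed
    then show False using nz by (auto simp: c_def)
  qed
qed

text \<open>Lifting x to (x, 1) turns affine independence into linear independence and affine hulls
  into spans.\<close>
lemma affine_independent_card_le:
  fixes B C :: "'a::real_vector set"
  assumes B: "finite B" "\<not> affine_dependent B" and C: "finite C" and sub: "B \<subseteq> affine hull C"
  shows "card B \<le> card C"
proof -
  define L where "L x = (x, 1::real)" for x :: 'a
  have inj: "inj L" by (auto simp: L_def inj_def)
  have "independent (L ` B)"
  proof
    assume "dependent (L ` B)"
    then obtain u where nz: "\<exists>y\<in>L ` B. u y \<noteq> 0" and zero: "(\<Sum>y\<in>L ` B. u y *\<^sub>R y) = 0"
      using dependent_finite[OF finite_imageI[OF B(1)]] by blast
    have "(\<Sum>b\<in>B. u (L b) *\<^sub>R L b) = 0"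
      using zero by (simp add: sum.reindex inj_on_subset[OF inj])
    then have "(\<Sum>b\<in>B. u (L b)) = 0" "(\<Sum>b\<in>B. u (L b) *\<^sub>R b) = 0"
      by (simp_all add: L_def prod_eq_iff fst_sum snd_sum)
    then have "affine_dependent B"
      using nz affine_dependent_explicit_finite[OF B(1)] by auto
    then show False using B(2) by contradiction
  qed
  moreover have "L ` B \<subseteq> span (L ` C)"
  proof
    fix y assume "y \<in> L ` B"
    then obtain b where b: "b \<in> affine hull C" "y = L b" using sub by auto
    then obtain u where u: "sum u C = 1" "(\<Sum>c\<in>C. u c *\<^sub>R c) = b"
      using affine_hull_finite[OF C] by auto
    have "y = (\<Sum>c\<in>C. u c *\<^sub>R L c)"
      using u b(2) by (simp add: L_def prod_eq_iff fst_sum snd_sum)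
    then show "y \<in> span (L ` C)"
      by (simp add: span_sum span_scale span_base)
  qed
  ultimately have "card (L ` B) \<le> card (L ` C)"
    using independent_span_bound[OF finite_imageI[OF C]] by blast
  then show ?thesis
    using card_image[OF inj_on_subset[OF inj]] by simp
qed

lemma gen_aff_dim_eq_card:
  fixes B S :: "'a::real_vector set"
  assumes B: "finite B" "\<not> affine_dependent B" and hull: "affine hull B = affine hull S"
  shows "gen_aff_dim S = int (card B) - 1"
proof -
  have "\<exists>d B'. finite B' \<and> affine hull B' = affine hull S \<and> \<not> affine_dependent B' \<and>
                of_nat (card B') = (d::int) + 1"
    using assms by (intro exI[where x="int (card B) - 1"] exI[where x=B]) auto
  from someI_ex[OF this] obtain B' where B': "finite B'" "affine hull B' = affine hull S"
    "\<not> affine_dependent B'" "int (card B') = gen_aff_dim S + 1"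
    unfolding gen_aff_dim_def by blast
  have "B \<subseteq> affine hull B'" "B' \<subseteq> affine hull B"
    using hull B'(2) hull_subset[of B affine] hull_subset[of B' affine] by simp_all
  then have "card B \<le> card B'" "card B' \<le> card B"
    using affine_independent_card_le B B'(1,3) by blast+
  then show ?thesis using B'(4) by simp
qed

lemma card_ordered_pairs:
  fixes A :: "'a::linorder set"
  assumes "finite A"
  shows "card {(a, b). a \<in> A \<and> b \<in> A \<and> a < b} = card A choose 2"
    (is "card ?pairs = _")
proof -
  have "bij_betw (\<lambda>(a, b). {a, b}) ?pairs {X. X \<subseteq> A \<and> card X = 2}"
  proof (rule bij_betw_imageI)
    show "inj_on (\<lambda>(a, b). {a, b}) ?pairs"
      by (rule inj_onI) (auto simp: doubleton_eq_iff)
    show "(\<lambda>(a, b). {a, b}) ` ?pairs = {X. X \<subseteq> A \<and> card X = 2}"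
    proof (intro equalityI subsetI)
      fix X assume "X \<in> (\<lambda>(a, b). {a, b}) ` ?pairs"
      then obtain a b where "X = {a, b}" "a \<in> A" "b \<in> A" "a < b" by auto
      then show "X \<in> {X. X \<subseteq> A \<and> card X = 2}" by simp
    next
      fix X assume "X \<in> {X. X \<subseteq> A \<and> card X = 2}"
      then obtain x y where X: "X = {x, y}" "x \<noteq> y" "X \<subseteq> A"
        by (auto simp: card_2_iff)
      then have "X = {min x y, max x y}" "min x y < max x y" "{min x y, max x y} \<subseteq> A"
        by (auto simp: min_def max_def)
      then show "X \<in> (\<lambda>(a, b). {a, b}) ` ?pairs"
        by (intro image_eqI[of _ _ "(min x y, max x y)"]) auto
    qed
  qed
  then have "card ?pairs = card {X. X \<subseteq> A \<and> card X = 2}"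
    by (rule bij_betw_same_card)
  also have "\<dots> = card A choose 2"
    by (rule n_subsets[OF assms])
  finally show ?thesis .
qed

lemma complete_graph_edges_eq: "complete_graph_edges V = {A. A \<subseteq> V \<and> card A = 2}"
  unfolding complete_graph_edges_def by (auto simp: card_2_iff)

lemma card_complete_graph_edges: "finite V \<Longrightarrow> card (complete_graph_edges V) = card V choose 2"
  by (simp add: complete_graph_edges_eq n_subsets)

lemma is_st_p_path_complete_graph:
  "is_st_p_path V (complete_graph_edges V) s t p vs \<longleftrightarrow>
     length vs = p + 1 \<and> distinct vs \<and> set vs \<subseteq> V \<and> hd vs = s \<and> last vs = t"
  unfolding is_st_p_path_def complete_graph_edges_def
  by (fastforce simp: nth_eq_iff_index_eq)

lemma is_st_3_path_complete_graph:
  "is_st_p_path V (complete_graph_edges V) s t 3 vs \<longleftrightarrow>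
     (\<exists>a b. vs = [s, a, b, t] \<and> distinct [s, a, b, t] \<and> set [s, a, b, t] \<subseteq> V)"
  unfolding is_st_p_path_complete_graph
  by (auto simp: numeral_eq_Suc length_Suc_conv)

definition path3_vector :: "nat \<Rightarrow> nat \<Rightarrow> nat \<Rightarrow> (nat set \<Rightarrow>\<^sub>0 real)" where
  "path3_vector t a b =
     Poly_Mapping.single {0, a} 1 + Poly_Mapping.single {a, b} 1 + Poly_Mapping.single {b, t} 1"

lemma lookup_path3_vector:
  "Poly_Mapping.lookup (path3_vector t a b) e =
     of_bool (e = {0, a}) + of_bool (e = {a, b}) + of_bool (e = {b, t})"
  by (simp add: path3_vector_def lookup_add lookup_single when_def eq_commute)

lemma path_edges_4: "path_edges [x0, x1, x2, x3] = {{x0, x1}, {x1, x2}, {x2, x3}}"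
proof -
  have "path_edges [x0, x1, x2, x3] =
          (\<lambda>i. {[x0, x1, x2, x3] ! i, [x0, x1, x2, x3] ! Suc i}) ` {i. Suc i < 4}"
    unfolding path_edges_def by auto
  also have "{i. Suc i < 4} = {0, 1, 2 :: nat}" by auto
  finally show ?thesis by (simp add: numeral_eq_Suc)
qed

lemma incidence_vector_path3:
  assumes "distinct [0, a, b, t]"
  shows "incidence_vector (path_edges [0, a, b, t]) = path3_vector t a b"
proof -
  have "{0, a} \<noteq> {a, b}" "{0, a} \<noteq> {b, t}" "{a, b} \<noteq> {b, t}"
    using assms by (auto simp: doubleton_eq_iff)
  then show ?thesis
    by (simp add: path_edges_4 incidence_vector_def path3_vector_def add.assoc)
qed

lemma path_polytope_complete_graph_3:
  "path_polytope {0..n} (complete_graph_edges {0..n}) 0 n 3 =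
     convex hull {path3_vector n a b | a b. a \<in> {1..<n} \<and> b \<in> {1..<n} \<and> a \<noteq> b}"
proof -
  have inner: "distinct [0, a, b, n] \<and> set [0, a, b, n] \<subseteq> {0..n} \<longleftrightarrow>
                a \<in> {1..<n} \<and> b \<in> {1..<n} \<and> a \<noteq> b" for a b :: nat
    by auto
  have "{incidence_vector (path_edges vs) | vs. is_st_p_path {0..n} (complete_graph_edges {0..n}) 0 n 3 vs}
      = {incidence_vector (path_edges [0, a, b, n]) | a b.
           distinct [0, a, b, n] \<and> set [0, a, b, n] \<subseteq> {0..n}}"
    unfolding is_st_3_path_complete_graph by blast
  also have "\<dots> = {path3_vector n a b | a b. a \<in> {1..<n} \<and> b \<in> {1..<n} \<and> a \<noteq> b}"
    by (metis (no_types, lifting) incidence_vector_path3 inner)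
  finally show ?thesis
    by (simp add: path_polytope_def)
qed

definition path3_basis :: "nat \<Rightarrow> (nat \<times> nat) set" where
  "path3_basis n = {(a, b). 1 \<le> a \<and> a < b \<and> b < n} \<union> (\<lambda>j. (j, 1)) ` {2..<n}"

lemma finite_path3_basis: "finite (path3_basis n)"
  by (rule finite_subset[of _ "{0..n} \<times> {0..n}"]) (auto simp: path3_basis_def)

text \<open>Coordinate {a, b} isolates p(a, b) when 2 \<le> a; once those coefficients vanish,
  {0, j} isolates p(j, 1); finally {1, b} isolates p(1, b).\<close>
lemma path3_basis_independent:
  "inj_on (case_prod (path3_vector n)) (path3_basis n) \<and>
   independent (case_prod (path3_vector n) ` path3_basis n)"
proof (rule triangular_family_independent)
  let ?coord = "\<lambda>(a, b). if b = 1 then {0, a} else {a, b :: nat}"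
  let ?rank = "\<lambda>(a, b). if b = 1 then 1 else if a = 1 then 2 else 0 :: nat"
  show "finite (path3_basis n)"
    by (rule finite_path3_basis)
  show "linear (\<lambda>x :: nat set \<Rightarrow>\<^sub>0 real. Poly_Mapping.lookup x (?coord p))" for p
    by (rule linear_lookup)
  show "Poly_Mapping.lookup (case_prod (path3_vector n) p) (?coord p) \<noteq> 0" for p
    by (cases p) (simp add: lookup_path3_vector add_nonneg_eq_0_iff)
  show "Poly_Mapping.lookup (case_prod (path3_vector n) q) (?coord p) = 0"
    if "p \<in> path3_basis n" "q \<in> path3_basis n" "q \<noteq> p" "?rank p \<le> ?rank q" for p q
    using that by (auto simp: path3_basis_def lookup_path3_vector doubleton_eq_iff split: if_splits)
qed

lemma path3_vector_reverse:
  "path3_vector t a b =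
     path3_vector t b a + 1 *\<^sub>R (path3_vector t a 1 - path3_vector t 1 a)
       + 1 *\<^sub>R (path3_vector t 1 b - path3_vector t b 1)"
  by (simp add: path3_vector_def insert_commute algebra_simps)

lemma affine_hull_path3_basis:
  "affine hull (case_prod (path3_vector n) ` path3_basis n) =
     affine hull {path3_vector n a b | a b. a \<in> {1..<n} \<and> b \<in> {1..<n} \<and> a \<noteq> b}"
  (is "affine hull ?B = affine hull ?P")
proof
  show "affine hull ?B \<subseteq> affine hull ?P"
    by (rule hull_mono) (force simp: path3_basis_def)
  have in_B: "path3_vector n a b \<in> affine hull ?B" if "(a, b) \<in> path3_basis n" for a b
    using that by (intro hull_inc) force
  show "affine hull ?P \<subseteq> affine hull ?B"
  proof (rule hull_minimal, clarify)
    fix a b assume ab: "a \<in> {1..<n}" "b \<in> {1..<n}" "a \<noteq> b"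
    consider "a < b" | "b = 1" | "1 < b" "b < a"
      using ab by fastforce
    then show "path3_vector n a b \<in> affine hull ?B"
    proof cases
      case 3
      have "path3_vector n b a + 1 *\<^sub>R (path3_vector n a 1 - path3_vector n 1 a)
              + 1 *\<^sub>R (path3_vector n 1 b - path3_vector n b 1) \<in> affine hull ?B"
        using ab 3 by (intro mem_affine_3_minus affine_affine_hull in_B) (auto simp: path3_basis_def)
      then show ?thesis by (simp only: path3_vector_reverse[symmetric])
    qed (use ab in \<open>intro in_B, force simp: path3_basis_def\<close>)+
  qed simp
qed

lemma card_path3_basis: "card (path3_basis n) = ((n - 1) choose 2) + (n - 2)"
proof -
  have finite_increasing: "finite {(a, b). 1 \<le> a \<and> a < b \<and> b < n}"
    by (rule finite_subset[of _ "{0..n} \<times> {0..n}"]) auto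
  have "card {(a, b). 1 \<le> a \<and> a < b \<and> b < n} =
          card {(a, b). a \<in> {1..<n} \<and> b \<in> {1..<n} \<and> a < b}"
    by (rule arg_cong[where f = card]) auto
  also have "\<dots> = (n - 1) choose 2"
    by (subst card_ordered_pairs) simp_all
  finally have increasing: "card {(a, b). 1 \<le> a \<and> a < b \<and> b < n} = (n - 1) choose 2" .
  have via_1: "card ((\<lambda>j. (j, 1 :: nat)) ` {2..<n}) = n - 2"
    by (simp add: card_image inj_on_def)
  show ?thesis
    unfolding path3_basis_def using finite_increasing increasing via_1
    by (subst card_Un_disjoint) auto
qed

theorem mainTheorem15:
  fixes n :: nat
  assumes "n \<ge> 3"
  shows "gen_aff_dim (path_polytope {0..n} (complete_graph_edges {0..n}) 0 n 3)
           = int (card (complete_graph_edges {0..n})) - int n - 2"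
proof -
  let ?P = "path_polytope {0..n} (complete_graph_edges {0..n}) 0 n 3"
  let ?B = "case_prod (path3_vector n) ` path3_basis n"
  have inj: "inj_on (case_prod (path3_vector n)) (path3_basis n)" and indep: "independent ?B"
    using path3_basis_independent by simp_all
  obtain m where m: "n = 3 + m"
    using le_Suc_ex[OF assms] by blast
  have "gen_aff_dim ?P = int (card ?B) - 1"
  proof (rule gen_aff_dim_eq_card)
    show "finite ?B" using finite_path3_basis by simp
    show "\<not> affine_dependent ?B" using indep affine_dependent_imp_dependent by blast
    show "affine hull ?B = affine hull ?P"
      by (simp add: path_polytope_complete_graph_3 affine_hull_path3_basis affine_hull_convex_hull)
  qed
  also have "card ?B = ((n - 1) choose 2) + (n - 2)"
    using card_image[OF inj] card_path3_basis by simp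
  also have "int (((n - 1) choose 2) + (n - 2)) - 1 = int ((n + 1) choose 2) - int n - 2"
    using m by (simp add: numeral_2_eq_2 numeral_3_eq_3)
  also have "(n + 1) choose 2 = card (complete_graph_edges {0..n})"
    by (simp add: card_complete_graph_edges)
  finally show ?thesis .
qed

end
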